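(* Let $X$ be a nonempty open bounded subset of $\mathbb{R}^n$. Suppose a sequence $(F_k)_k$ in $C_{cm}(X,\mathbb{R}^n)$ converges (for the metric $s$) to $F\in C_{cm}(X,\mathbb{R}^n)$, a sequence of points $x_k\in X$ converges to $x\in X$, a sequence of vectors $\eta_k\in\mathbb{R}^n$ converges to $\eta\in\mathbb{R}^n$, and $\eta_k\in F_k(x_k)$ for every $k$. Then $\eta\in F(x)$. The same holds with $C_{cm}(X,\mathbb{R}^n)$ and $s$ replaced by $C_{ae}(X,\mathbb{R}^n)$ and $r$.
   Context: Comeager = complement is a countable union of nowhere dense subsets of $X$. $C_{cm}(X,\mathbb{R}^m)$: classes of bounded maps $X\to\mathbb{R}^m$ continuous on a comeager set, modulo coincidence on a comeager set; $C_{ae}(X,\mathbb{R}^m)$: classes of bounded maps continuous a.e., modulo coincidence a.e. For $\xi\in\mathbb{R}^m$, $\langle f(\cdot),\xi\rangle$ is the real class of $x\mapsto\langle\varphi(x),\xi\rangle$. For real classes and $k\in\mathbb{N}$: $f_k^-=\sup\{\varphi\in Lip_k(X,\mathbb{R}):\varphi\le f\}$, $f_k^+=\inf\{\varphi\in Lip_k(X,\mathbb{R}):\varphi\ge f\}$; $h(\varphi,\psi)$ is the Hausdorff distance of closures of graphs in $\mathrm{cl}X\times\mathbb{R}$ of bounded continuous functions, $\delta=h+\int_X|\varphi-\psi|dx$; $s(f,g)=\sup_k\max\{h(f_k^-,g_k^-),h(f_k^+,g_k^+)\}$, $r(f,g)=\sup_k\max\{\delta(f_k^-,g_k^-),\delta(f_k^+,g_k^+)\}$;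 for vector classes $s(f,g)=\sup_{\|\xi\|=1}s(\langle f,\xi\rangle,\langle g,\xi\rangle)$ and likewise $r$. The value of a class $f$ at $x$ is $f(x)=\bigcap_{\varepsilon>0}\overline{\mathrm{co}}\{\varphi(y):y\in B(x,\varepsilon)\cap C_\varphi\}$ for a representative $\varphi$ with continuity set $C_\varphi$ (independent of $\varphi$). *)

theory Defs
  imports "HOL-Analysis.Analysis"
begin

definition nowhere_dense :: "'a::topological_space set \<Rightarrow> bool" where
  "nowhere_dense S \<longleftrightarrow> interior (closure S) = {}"

definition cm_small :: "'a::topological_space set \<Rightarrow> 'a set \<Rightarrow> bool" where
  "cm_small X S \<longleftrightarrow>
     (\<exists>N :: nat \<Rightarrow> 'a set. (\<forall>i. N i \<subseteq> X \<and> nowhere_dense (N i)) \<and> S = (\<Union>i. N i))"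

definition ae_small :: "'a::euclidean_space set \<Rightarrow> 'a set \<Rightarrow> bool" where
  "ae_small X S \<longleftrightarrow> S \<subseteq> X \<and> S \<in> null_sets lebesgue"

definition comeager :: "'a::topological_space set \<Rightarrow> 'a set \<Rightarrow> bool" where
  "comeager X C \<longleftrightarrow> C \<subseteq> X \<and> cm_small X (X - C)"

definition cont_set :: "'a::t2_space set \<Rightarrow> ('a \<Rightarrow> 'b::topological_space) \<Rightarrow> 'a set" where
  "cont_set X \<phi> = {x \<in> X. continuous (at x within X) \<phi>}"

text \<open>A representative of a class of \<open>C_cm(X,R^m)\<close>: bounded on X, continuous on a comeager set.\<close>
definition in_Ccm :: "'a::euclidean_space set \<Rightarrow> ('a \<Rightarrow> 'b::real_normed_vector) \<Rightarrow> bool" where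
  "in_Ccm X \<phi> \<longleftrightarrow> bounded (\<phi> ` X) \<and> comeager X (cont_set X \<phi>)"

text \<open>A representative of a class of \<open>C_ae(X,R^m)\<close>: bounded on X, continuous a.e. on X.\<close>
definition in_Cae :: "'a::euclidean_space set \<Rightarrow> ('a \<Rightarrow> 'b::real_normed_vector) \<Rightarrow> bool" where
  "in_Cae X \<phi> \<longleftrightarrow> bounded (\<phi> ` X) \<and> ae_small X (X - cont_set X \<phi>)"

text \<open>\<open>\<phi> \<le> f\<close> as classes: the set where it fails is small.\<close>
definition cls_le :: "('a set \<Rightarrow> 'a set \<Rightarrow> bool) \<Rightarrow> 'a set \<Rightarrow> ('a \<Rightarrow> real) \<Rightarrow> ('a \<Rightarrow> real) \<Rightarrow> bool" where
  "cls_le small X \<phi> f \<longleftrightarrow> small X {x \<in> X. \<not> \<phi> x \<le> f x}"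

definition lower_env :: "('a::metric_space set \<Rightarrow> 'a set \<Rightarrow> bool) \<Rightarrow> 'a set \<Rightarrow> nat \<Rightarrow> ('a \<Rightarrow> real) \<Rightarrow> 'a \<Rightarrow> real" where
  "lower_env small X k f x =
     Sup {\<phi> x | \<phi>. (real k)-lipschitz_on X \<phi> \<and> cls_le small X \<phi> f}"

definition upper_env :: "('a::metric_space set \<Rightarrow> 'a set \<Rightarrow> bool) \<Rightarrow> 'a set \<Rightarrow> nat \<Rightarrow> ('a \<Rightarrow> real) \<Rightarrow> 'a \<Rightarrow> real" where
  "upper_env small X k f x =
     Inf {\<phi> x | \<phi>. (real k)-lipschitz_on X \<phi> \<and> cls_le small X f \<phi>}"

definition hausdist :: "'a::metric_space set \<Rightarrow> 'a set \<Rightarrow> real" where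
  "hausdist S T = max (SUP x\<in>S. infdist x T) (SUP y\<in>T. infdist y S)"

definition graph_cl :: "'a::euclidean_space set \<Rightarrow> ('a \<Rightarrow> real) \<Rightarrow> ('a \<times> real) set" where
  "graph_cl X \<phi> = closure ((\<lambda>x. (x, \<phi> x)) ` X)"

definition hd :: "'a::euclidean_space set \<Rightarrow> ('a \<Rightarrow> real) \<Rightarrow> ('a \<Rightarrow> real) \<Rightarrow> real" where
  "hd X \<phi> \<psi> = hausdist (graph_cl X \<phi>) (graph_cl X \<psi>)"

definition dlt :: "'a::euclidean_space set \<Rightarrow> ('a \<Rightarrow> real) \<Rightarrow> ('a \<Rightarrow> real) \<Rightarrow> real" where
  "dlt X \<phi> \<psi> = hd X \<phi> \<psi> + (LINT x:X|lebesgue. \<bar>\<phi> x - \<psi> x\<bar>)"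

definition s_real :: "'a::euclidean_space set \<Rightarrow> ('a \<Rightarrow> real) \<Rightarrow> ('a \<Rightarrow> real) \<Rightarrow> real" where
  "s_real X f g = (SUP k\<in>{1::nat..}.
      max (hd X (lower_env cm_small X k f) (lower_env cm_small X k g))
          (hd X (upper_env cm_small X k f) (upper_env cm_small X k g)))"

definition r_real :: "'a::euclidean_space set \<Rightarrow> ('a \<Rightarrow> real) \<Rightarrow> ('a \<Rightarrow> real) \<Rightarrow> real" where
  "r_real X f g = (SUP k\<in>{1::nat..}.
      max (dlt X (lower_env ae_small X k f) (lower_env ae_small X k g))
          (dlt X (upper_env ae_small X k f) (upper_env ae_small X k g)))"

definition s_vec :: "'a::euclidean_space set \<Rightarrow> ('a \<Rightarrow> 'b::euclidean_space) \<Rightarrow> ('a \<Rightarrow> 'b) \<Rightarrow> real" where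
  "s_vec X F G = (SUP \<xi>\<in>sphere (0::'b) 1. s_real X (\<lambda>x. F x \<bullet> \<xi>) (\<lambda>x. G x \<bullet> \<xi>))"

definition r_vec :: "'a::euclidean_space set \<Rightarrow> ('a \<Rightarrow> 'b::euclidean_space) \<Rightarrow> ('a \<Rightarrow> 'b) \<Rightarrow> real" where
  "r_vec X F G = (SUP \<xi>\<in>sphere (0::'b) 1. r_real X (\<lambda>x. F x \<bullet> \<xi>) (\<lambda>x. G x \<bullet> \<xi>))"

definition cls_value :: "'a::euclidean_space set \<Rightarrow> ('a \<Rightarrow> 'b::euclidean_space) \<Rightarrow> 'a \<Rightarrow> 'b set" where
  "cls_value X \<phi> x = (\<Inter>\<epsilon>\<in>{0<..}. closure (convex hull (\<phi> ` (ball x \<epsilon> \<inter> cont_set X \<phi>))))"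

end

(*
  If \<eta> is not a value of F at x, then for some \<epsilon> > 0 a hyperplane with unit normal \<xi> strictly
  separates \<eta> from the values of F at continuity points in the \<epsilon>-ball around x. A cone of
  slope n over the separating level, with n large compared with the bound of F, is an
  n-Lipschitz majorant of <F, \<xi>> outside the small set of discontinuities, so the upper
  Lipschitz envelope <F, \<xi>>\<^sup>+\<^sub>n lies strictly below <\<eta>, \<xi>> at x.
  Conversely, since small sets have empty interior, a Lipschitz majorant dominates a function at
  each of its continuity points; hence <\<eta>\<^sub>k, \<xi>> \<le> <F\<^sub>k, \<xi>>\<^sup>+\<^sub>n (x\<^sub>k). For Lipschitz functions the
  Hausdorff distance of the graphs bounds the pointwise distance, and both s and r dominate
  these Hausdorff distances; letting k tend to infinity gives <\<eta>, \<xi>> \<le> <F, \<xi>>\<^sup>+\<^sub>n (x).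
*)

theory Submission
  imports Defs
begin

section \<open>Values of classes\<close>

lemma abs_inner_le_of_norm_le:
  fixes v \<xi> :: "'a::real_inner"
  assumes "norm v \<le> M" "\<xi> \<in> sphere 0 1"
  shows "\<bar>v \<bullet> \<xi>\<bar> \<le> M"
  using Cauchy_Schwarz_ineq2[of v \<xi>] assms by simp

lemma bounded_image_abs_inner_le:
  fixes \<phi> :: "'a \<Rightarrow> 'b::real_inner"
  assumes "bounded (\<phi> ` X)" "\<xi> \<in> sphere 0 1"
  obtains M where "\<forall>z\<in>X. \<bar>\<phi> z \<bullet> \<xi>\<bar> \<le> M"
proof -
  obtain M where "\<forall>z\<in>X. norm (\<phi> z) \<le> M"
    using assms(1) unfolding bounded_iff by blast
  then have "\<forall>z\<in>X. \<bar>\<phi> z \<bullet> \<xi>\<bar> \<le> M"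
    using abs_inner_le_of_norm_le[OF _ assms(2)] by blast
  then show ?thesis
    by (rule that)
qed

lemma inner_le_if_mem_cls_value:
  assumes "\<eta> \<in> cls_value X \<phi> y" "\<epsilon> > 0"
    and "\<And>w. w \<in> ball y \<epsilon> \<inter> cont_set X \<phi> \<Longrightarrow> \<phi> w \<bullet> \<xi> \<le> c"
  shows "\<eta> \<bullet> \<xi> \<le> c"
proof -
  have "\<phi> ` (ball y \<epsilon> \<inter> cont_set X \<phi>) \<subseteq> {v. \<xi> \<bullet> v \<le> c}"
    using assms(3) by (auto simp: inner_commute)
  then have "closure (convex hull (\<phi> ` (ball y \<epsilon> \<inter> cont_set X \<phi>))) \<subseteq> {v. \<xi> \<bullet> v \<le> c}"
    by (intro closure_minimal hull_minimal convex_halfspace_le closed_halfspace_le)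
  then show ?thesis
    using assms(1,2) unfolding cls_value_def by (auto simp: inner_commute)
qed

lemma separate_point_from_convex_hull:
  fixes \<eta> :: "'a::euclidean_space"
  assumes "\<eta> \<notin> closure (convex hull S)"
  obtains \<xi> \<beta> where "\<xi> \<in> sphere 0 1" "\<beta> < \<eta> \<bullet> \<xi>" "\<And>v. v \<in> S \<Longrightarrow> v \<bullet> \<xi> < \<beta>"
proof -
  have "\<exists>a b. a \<bullet> \<eta> < b \<and> (\<forall>v \<in> closure (convex hull S). b < a \<bullet> v)"
    by (rule separating_hyperplane_closed_point[OF convex_closure[OF convex_convex_hull] closed_closure assms])
  then obtain a b where ab: "a \<bullet> \<eta> < b" "\<forall>v \<in> closure (convex hull S). b < a \<bullet> v"
    by blast
  have S: "S \<subseteq> closure (convex hull S)"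
    by (rule order_trans[OF hull_subset closure_subset])
  show ?thesis
  proof (cases "a = 0")
    case True
    have "S = {}"
    proof (rule ccontr)
      assume "S \<noteq> {}"
      then obtain v where "v \<in> S"
        by blast
      then show False
        using ab(1) ab(2)[rule_format, OF subsetD[OF S]] True by simp
    qed
    obtain \<xi> :: 'a where "norm \<xi> = 1"
      using vector_choose_size zero_le_one by blast
    then show ?thesis
      using that[of \<xi> "\<eta> \<bullet> \<xi> - 1"] \<open>S = {}\<close> by simp
  next
    case False
    then have "norm a > 0"
      by simp
    have inner_eq: "v \<bullet> (- a /\<^sub>R norm a) = - (a \<bullet> v) / norm a" for v
      by (simp add: inner_commute field_simps)
    show ?thesis
    proof (rule that[of "- a /\<^sub>R norm a" "- b / norm a"])
      show "- a /\<^sub>R norm a \<in> sphere 0 1"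
        using False by simp
      show "- b / norm a < \<eta> \<bullet> (- a /\<^sub>R norm a)"
        unfolding inner_eq using ab(1) \<open>norm a > 0\<close> by (intro divide_strict_right_mono) auto
      show "v \<bullet> (- a /\<^sub>R norm a) < - b / norm a" if "v \<in> S" for v
        unfolding inner_eq using ab(2)[rule_format, OF subsetD[OF S that]] \<open>norm a > 0\<close> by (intro divide_strict_right_mono) auto
    qed
  qed
qed

section \<open>Hausdorff distance of graphs\<close>

lemma infdist_le_hausdist:
  assumes "bounded S" "p \<in> S"
  shows "infdist p T \<le> hausdist S T"
proof -
  obtain e where e: "\<forall>q\<in>S. dist p q \<le> e"
    using assms(1) bounded_any_center by blast
  have "infdist q T \<le> infdist p T + e" if "q \<in> S" for q
  proof -
    have "infdist q T \<le> infdist p T + dist q p"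
      by (rule infdist_triangle)
    also have "dist q p \<le> e"
      using e that dist_commute by metis
    finally show ?thesis
      by simp
  qed
  then have "bdd_above ((\<lambda>q. infdist q T) ` S)"
    by (rule bdd_aboveI2)
  then have "infdist p T \<le> (SUP q\<in>S. infdist q T)"
    by (rule cSUP_upper[OF assms(2)])
  then show ?thesis
    unfolding hausdist_def by simp
qed

lemma hausdist_le_diameter:
  assumes "bounded (S \<union> T)" "S \<noteq> {}" "T \<noteq> {}"
  shows "hausdist S T \<le> diameter (S \<union> T)"
proof -
  have le: "infdist p A \<le> diameter (S \<union> T)"
    if p: "p \<in> S \<union> T" and A: "A \<noteq> {}" "A \<subseteq> S \<union> T" for p A
  proof -
    obtain q where "q \<in> A"
      using A(1) by blast
    then show ?thesis
      using infdist_le[of q A p] diameter_bounded_bound[OF assms(1) p, of q] A(2) by auto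
  qed
  show ?thesis
    unfolding hausdist_def using assms(2,3) by (auto intro!: cSUP_least le)
qed

lemma graph_cl_subset:
  assumes "\<forall>z\<in>X. \<bar>\<phi> z\<bar> \<le> M"
  shows "graph_cl X \<phi> \<subseteq> closure (X \<times> {-M..M})"
  unfolding graph_cl_def using assms by (intro closure_mono) (auto simp: abs_le_iff)

lemma bounded_graph_cl:
  assumes "bounded X" "\<forall>z\<in>X. \<bar>\<phi> z\<bar> \<le> M"
  shows "bounded (graph_cl X \<phi>)"
  using graph_cl_subset[OF assms(2)] bounded_Times[OF assms(1) bounded_closed_interval]
  by (rule bounded_subset[OF bounded_closure, rotated])

lemma pair_in_graph_cl: "y \<in> X \<Longrightarrow> (y, \<phi> y) \<in> graph_cl X \<phi>"
  unfolding graph_cl_def using closure_subset by fastforce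

lemma hd_le_diameter:
  assumes "bounded X" "X \<noteq> {}" "\<forall>z\<in>X. \<bar>\<phi> z\<bar> \<le> M" "\<forall>z\<in>X. \<bar>\<psi> z\<bar> \<le> M"
  shows "hd X \<phi> \<psi> \<le> diameter (X \<times> {-M..M})"
proof -
  have bdd: "bounded (X \<times> {-M..M})"
    using assms(1) by (simp add: bounded_Times)
  have sub: "graph_cl X \<phi> \<union> graph_cl X \<psi> \<subseteq> closure (X \<times> {-M..M})"
    using graph_cl_subset assms(3,4) by blast
  have "hd X \<phi> \<psi> \<le> diameter (graph_cl X \<phi> \<union> graph_cl X \<psi>)"
    unfolding hd_def using assms pair_in_graph_cl
    by (intro hausdist_le_diameter bounded_subset[OF bounded_closure[OF bdd] sub]) blast+
  also have "\<dots> \<le> diameter (closure (X \<times> {-M..M}))"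
    by (rule diameter_subset[OF sub bounded_closure[OF bdd]])
  also have "\<dots> = diameter (X \<times> {-M..M})"
    by (rule diameter_closure[OF bdd])
  finally show ?thesis .
qed

lemma le_add_hd:
  fixes \<phi> \<psi> :: "'a::euclidean_space \<Rightarrow> real"
  assumes "bounded X" "\<forall>z\<in>X. \<bar>\<phi> z\<bar> \<le> M" "L-lipschitz_on X \<psi>" "y \<in> X"
  shows "\<phi> y \<le> \<psi> y + (L + 1) * hd X \<phi> \<psi>"
proof -
  let ?p = "(y, \<phi> y)" and ?G = "(\<lambda>z. (z, \<psi> z)) ` X"
  have "L \<ge> 0"
    using assms(3) by (rule lipschitz_on_nonneg)
  have "\<phi> y - \<psi> y \<le> (L + 1) * dist ?p g" if g: "g \<in> ?G" for g
  proof -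
    obtain z where z: "z \<in> X" "g = (z, \<psi> z)"
      using g by blast
    have "dist y z \<le> dist ?p g" "dist (\<phi> y) (\<psi> z) \<le> dist ?p g"
      using dist_fst_le[of ?p g] dist_snd_le[of ?p g] z(2) by simp_all
    moreover have "dist (\<psi> z) (\<psi> y) \<le> L * dist z y"
      by (rule lipschitz_onD[OF assms(3) z(1) assms(4)])
    moreover have "L * dist z y \<le> L * dist ?p g"
      using calculation(1) \<open>L \<ge> 0\<close> by (simp add: dist_commute mult_left_mono)
    ultimately show ?thesis
      by (simp add: dist_real_def abs_le_iff algebra_simps)
  qed
  then have "(\<phi> y - \<psi> y) / (L + 1) \<le> (INF g\<in>?G. dist ?p g)"
    using assms(4) \<open>L \<ge> 0\<close> by (intro cINF_greatest) (auto simp: pos_divide_le_eq mult.commute)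
  also have "\<dots> = infdist ?p ?G"
    using assms(4) by (intro infdist_notempty[symmetric]) blast
  also have "infdist ?p ?G = infdist ?p (graph_cl X \<psi>)"
    by (simp add: graph_cl_def infdist_eq_setdist)
  also have "\<dots> \<le> hd X \<phi> \<psi>"
    unfolding hd_def
    by (rule infdist_le_hausdist[OF bounded_graph_cl[OF assms(1,2)] pair_in_graph_cl[OF assms(4)]])
  finally show ?thesis
    using \<open>L \<ge> 0\<close> by (simp add: divide_le_eq algebra_simps)
qed

lemma hd_le_dlt: "hd X \<phi> \<psi> \<le> dlt X \<phi> \<psi>"
  unfolding dlt_def set_lebesgue_integral_def by (simp add: integral_nonneg_AE)

lemma dlt_le_hd_add:
  assumes "X \<in> lmeasurable" "\<forall>z\<in>X. \<bar>\<phi> z\<bar> \<le> M" "\<forall>z\<in>X. \<bar>\<psi> z\<bar> \<le> M"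
  shows "dlt X \<phi> \<psi> \<le> hd X \<phi> \<psi> + measure lebesgue X * (2 * M)"
proof -
  have X: "X \<in> sets lebesgue" "emeasure lebesgue X < \<infinity>"
    using assms(1) unfolding fmeasurable_def by blast+
  then have "integrable lebesgue (\<lambda>x. indicator X x *\<^sub>R (2 * M))"
    by (rule integrable_indicator)
  moreover have "\<bar>\<phi> x - \<psi> x\<bar> \<le> 2 * M" if "x \<in> X" for x
    using assms(2,3) that abs_triangle_ineq4[of "\<phi> x" "\<psi> x"] by fastforce
  then have "indicator X x *\<^sub>R \<bar>\<phi> x - \<psi> x\<bar> \<le> indicator X x *\<^sub>R (2 * M)" for x
    by (simp add: indicator_def)
  moreover have "0 \<le> indicator X x *\<^sub>R (2 * M)" for x
    using assms(2) by (auto simp: indicator_def intro: order_trans[OF abs_ge_zero])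
  \<comment> \<open>No integrability of \<open>\<bar>\<phi> - \<psi>\<bar>\<close> is needed: otherwise its integral is 0.\<close>
  ultimately have "(LINT x:X|lebesgue. \<bar>\<phi> x - \<psi> x\<bar>) \<le> (LINT x:X|lebesgue. 2 * M)"
    unfolding set_lebesgue_integral_def by (intro integral_mono_AE') auto
  also have "\<dots> = measure lebesgue X * (2 * M)"
    using X by (simp add: set_integral_const)
  finally show ?thesis
    unfolding dlt_def by simp
qed

section \<open>Lipschitz envelopes\<close>

lemma lipschitz_on_const: "(real k)-lipschitz_on X (\<lambda>_. c)"
  by (rule lipschitz_on_mono[OF lipschitz_on_constant]) auto

lemma lipschitz_on_cone: "(real n)-lipschitz_on X (\<lambda>y. c + real n * dist y x)"
proof (rule lipschitz_onI)
  show "dist (c + real n * dist y x) (c + real n * dist z x) \<le> real n * dist y z" for y z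
    using abs_dist_diff_le[of y x z] mult_left_mono[of _ "dist y z" "real n"]
    by (simp add: dist_real_def dist_commute abs_mult flip: right_diff_distrib)
qed simp

lemma lower_env_eq_neg_upper_env:
  "lower_env small X k f y = - upper_env small X k (\<lambda>x. - f x) y"
proof -
  have lip: "L-lipschitz_on X (\<lambda>x. - \<phi> x) \<longleftrightarrow> L-lipschitz_on X \<phi>" for L and \<phi> :: "_ \<Rightarrow> real"
    by (simp add: lipschitz_on_def dist_real_def abs_minus_commute)
  have "{\<phi> y | \<phi>. (real k)-lipschitz_on X \<phi> \<and> cls_le small X \<phi> f}
      = uminus ` {\<psi> y | \<psi>. (real k)-lipschitz_on X \<psi> \<and> cls_le small X (\<lambda>x. - f x) \<psi>}"
  proof (intro equalityI subsetI)
    fix t assume "t \<in> {\<phi> y | \<phi>. (real k)-lipschitz_on X \<phi> \<and> cls_le small X \<phi> f}"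
    then obtain \<phi> where "t = \<phi> y" "(real k)-lipschitz_on X \<phi>" "cls_le small X \<phi> f"
      by blast
    then show "t \<in> uminus ` {\<psi> y | \<psi>. (real k)-lipschitz_on X \<psi> \<and> cls_le small X (\<lambda>x. - f x) \<psi>}"
      using lip[of k \<phi>] by (intro image_eqI[of _ _ "- t"]) (auto simp: cls_le_def)
  next
    fix t assume "t \<in> uminus ` {\<psi> y | \<psi>. (real k)-lipschitz_on X \<psi> \<and> cls_le small X (\<lambda>x. - f x) \<psi>}"
    then obtain \<psi> where "t = - \<psi> y" "(real k)-lipschitz_on X \<psi>" "cls_le small X (\<lambda>x. - f x) \<psi>"
      by blast
    moreover have "{x \<in> X. \<not> - \<psi> x \<le> f x} = {x \<in> X. \<not> - f x \<le> \<psi> x}"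
      by auto
    ultimately show "t \<in> {\<phi> y | \<phi>. (real k)-lipschitz_on X \<phi> \<and> cls_le small X \<phi> f}"
      using lip[of k \<psi>] by (intro CollectI exI[of _ "\<lambda>x. - \<psi> x"]) (simp add: cls_le_def)
  qed
  then show ?thesis
    unfolding lower_env_def upper_env_def Inf_real_def by (simp add: image_image)
qed

text \<open>Meagre and Lebesgue-null subsets of an open set X are both small in the following
  sense, and nothing else about them is used.\<close>

locale smallness =
  fixes small :: "'a::euclidean_space set \<Rightarrow> 'a set \<Rightarrow> bool" and X :: "'a set"
  assumes open_X: "open X"
    and small_empty: "small X {}"
    and small_subset: "small X A \<Longrightarrow> B \<subseteq> A \<Longrightarrow> small X B"
    and nonempty_open_not_small: "open U \<Longrightarrow> U \<subseteq> X \<Longrightarrow> U \<noteq> {} \<Longrightarrow> \<not> small X U"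

context smallness
begin

lemma cls_le_imp_le_at_continuity_point:
  fixes f g :: "'a \<Rightarrow> real"
  assumes "cls_le small X f g" "y \<in> X"
    and "continuous (at y within X) f" "continuous (at y within X) g"
  shows "f y \<le> g y"
proof (rule ccontr)
  assume "\<not> f y \<le> g y"
  have "((\<lambda>z. f z - g z) \<longlongrightarrow> f y - g y) (at y within X)"
    using assms(3,4) unfolding continuous_within by (rule tendsto_diff)
  then have "\<forall>\<^sub>F z in at y within X. 0 < f z - g z"
    by (rule order_tendstoD(1)) (use \<open>\<not> f y \<le> g y\<close> in simp)
  then obtain d where d: "d > 0" "\<And>z. z \<in> X \<Longrightarrow> z \<noteq> y \<Longrightarrow> dist z y < d \<Longrightarrow> 0 < f z - g z"
    unfolding eventually_at by blast
  obtain r where r: "r > 0" "ball y r \<subseteq> X"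
    using open_X assms(2) open_contains_ball by blast
  have "ball y (min r d) \<subseteq> {z \<in> X. \<not> f z \<le> g z}"
  proof
    fix z assume "z \<in> ball y (min r d)"
    then have "z \<in> X" "dist z y < d"
      using r by (auto simp: dist_commute)
    then show "z \<in> {z \<in> X. \<not> f z \<le> g z}"
      using d(2)[of z] \<open>\<not> f y \<le> g y\<close> by (cases "z = y") auto
  qed
  then have "small X (ball y (min r d))"
    using assms(1) small_subset unfolding cls_le_def by blast
  moreover have "ball y (min r d) \<subseteq> X" "ball y (min r d) \<noteq> {}"
    using r d by auto
  ultimately show False
    using nonempty_open_not_small by blast
qed

lemma lower_bound_le_lipschitz_majorant:
  assumes "\<forall>z\<in>X. c \<le> f z" "L-lipschitz_on X \<psi>" "cls_le small X f \<psi>" "y \<in> X"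
  shows "c \<le> \<psi> y"
proof (rule cls_le_imp_le_at_continuity_point[where f = "\<lambda>_. c"])
  show "cls_le small X (\<lambda>_. c) \<psi>"
    using assms(3) unfolding cls_le_def by (rule small_subset) (use assms(1) in auto)
  show "continuous (at y within X) \<psi>"
    using lipschitz_on_continuous_within assms(2,4) by blast
qed (use assms(4) in auto)

lemma cls_le_const:
  assumes "\<forall>z\<in>X. f z \<le> M"
  shows "cls_le small X f (\<lambda>_. M)"
proof -
  have "{z \<in> X. \<not> f z \<le> M} = {}"
    using assms by auto
  then show ?thesis
    unfolding cls_le_def by (simp only: small_empty)
qed

lemma upper_env_le_majorant:
  assumes "\<forall>z\<in>X. \<bar>f z\<bar> \<le> M" "(real k)-lipschitz_on X \<psi>" "cls_le small X f \<psi>" "y \<in> X"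
  shows "upper_env small X k f y \<le> \<psi> y"
  unfolding upper_env_def
proof (rule cInf_lower)
  show "bdd_below {\<psi> y |\<psi>. (real k)-lipschitz_on X \<psi> \<and> cls_le small X f \<psi>}"
  proof (rule bdd_belowI)
    fix t assume "t \<in> {\<psi> y |\<psi>. (real k)-lipschitz_on X \<psi> \<and> cls_le small X f \<psi>}"
    then obtain \<phi> where "t = \<phi> y" "(real k)-lipschitz_on X \<phi>" "cls_le small X f \<phi>"
      by blast
    moreover have "\<forall>z\<in>X. - M \<le> f z"
      using assms(1) by (metis abs_le_D2 minus_le_iff)
    ultimately show "- M \<le> t"
      using lower_bound_le_lipschitz_majorant assms(4) by blast
  qed
qed (use assms(2,3) in blast)

lemma le_upper_env:
  assumes "\<forall>z\<in>X. \<bar>f z\<bar> \<le> M"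
    and "\<And>\<psi>. (real k)-lipschitz_on X \<psi> \<Longrightarrow> cls_le small X f \<psi> \<Longrightarrow> c \<le> \<psi> y"
  shows "c \<le> upper_env small X k f y"
  unfolding upper_env_def
proof (rule cInf_greatest)
  have "cls_le small X f (\<lambda>_. M)"
    using assms(1) by (intro cls_le_const) (metis abs_le_D1)
  then have "M \<in> {\<psi> y |\<psi>. (real k)-lipschitz_on X \<psi> \<and> cls_le small X f \<psi>}"
    unfolding mem_Collect_eq by (intro exI[of _ "\<lambda>_. M"] conjI lipschitz_on_const) simp_all
  then show "{\<psi> y |\<psi>. (real k)-lipschitz_on X \<psi> \<and> cls_le small X f \<psi>} \<noteq> {}"
    by blast
qed (use assms(2) in blast)

lemma abs_upper_env_le:
  assumes "\<forall>z\<in>X. \<bar>f z\<bar> \<le> M" "y \<in> X"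
  shows "\<bar>upper_env small X k f y\<bar> \<le> M"
proof -
  have le_M: "\<forall>z\<in>X. f z \<le> M" and ge_M: "\<forall>z\<in>X. - M \<le> f z"
    using assms(1) by (auto simp: abs_le_iff)
  have "upper_env small X k f y \<le> M"
    using upper_env_le_majorant[OF assms(1) lipschitz_on_const cls_le_const[OF le_M] assms(2)] by simp
  moreover have "- M \<le> upper_env small X k f y"
    using le_upper_env[OF assms(1)] lower_bound_le_lipschitz_majorant[OF ge_M _ _ assms(2)] by blast
  ultimately show ?thesis
    by simp
qed

lemma abs_lower_env_le:
  assumes "\<forall>z\<in>X. \<bar>f z\<bar> \<le> M" "y \<in> X"
  shows "\<bar>lower_env small X k f y\<bar> \<le> M"
  using abs_upper_env_le[of "\<lambda>x. - f x" M y k] assms by (simp add: lower_env_eq_neg_upper_env)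

lemma lipschitz_upper_env:
  assumes "\<forall>z\<in>X. \<bar>f z\<bar> \<le> M"
  shows "(real k)-lipschitz_on X (upper_env small X k f)"
proof (rule lipschitz_onI)
  have le: "upper_env small X k f y \<le> upper_env small X k f z + real k * dist y z"
    if "y \<in> X" "z \<in> X" for y z
  proof -
    have "upper_env small X k f y - real k * dist y z \<le> upper_env small X k f z"
    proof (rule le_upper_env[OF assms])
      fix \<psi> assume lip: "(real k)-lipschitz_on X \<psi>" and maj: "cls_le small X f \<psi>"
      have "upper_env small X k f y \<le> \<psi> y"
        by (rule upper_env_le_majorant[OF assms lip maj that(1)])
      moreover have "\<psi> y \<le> \<psi> z + real k * dist y z"
        using lipschitz_onD[OF lip that] by (simp add: dist_real_def abs_le_iff)
      ultimately show "upper_env small X k f y - real k * dist y z \<le> \<psi> z"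
        by linarith
    qed
    then show ?thesis
      by simp
  qed
  show "dist (upper_env small X k f y) (upper_env small X k f z) \<le> real k * dist y z"
    if "y \<in> X" "z \<in> X" for y z
    using le[OF that] le[OF that(2,1)] by (simp add: dist_real_def dist_commute abs_le_iff)
qed simp

lemma inner_le_upper_env_if_mem_cls_value:
  fixes \<phi> :: "'a \<Rightarrow> 'b::euclidean_space"
  assumes "\<eta> \<in> cls_value X \<phi> y" "y \<in> X" "\<forall>z\<in>X. \<bar>\<phi> z \<bullet> \<xi>\<bar> \<le> M"
  shows "\<eta> \<bullet> \<xi> \<le> upper_env small X k (\<lambda>z. \<phi> z \<bullet> \<xi>) y"
proof (rule le_upper_env[OF assms(3)])
  fix \<psi> assume lip: "(real k)-lipschitz_on X \<psi>" and maj: "cls_le small X (\<lambda>z. \<phi> z \<bullet> \<xi>) \<psi>"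
  show "\<eta> \<bullet> \<xi> \<le> \<psi> y"
  proof (rule field_le_epsilon)
    fix e :: real assume "0 < e"
    have "0 < e / (real k + 1)"
      using \<open>0 < e\<close> by (intro divide_pos_pos) auto
    moreover have "\<phi> w \<bullet> \<xi> \<le> \<psi> y + e" if "w \<in> ball y (e / (real k + 1)) \<inter> cont_set X \<phi>" for w
    proof -
      have w: "w \<in> X" "continuous (at w within X) \<phi>" "dist w y < e / (real k + 1)"
        using that by (auto simp: cont_set_def dist_commute)
      have "\<phi> w \<bullet> \<xi> \<le> \<psi> w"
        using cls_le_imp_le_at_continuity_point[OF maj w(1)] w(2) lipschitz_on_continuous_within[OF lip w(1)]
        by (simp add: continuous_intros)
      also have "\<psi> w \<le> \<psi> y + real k * dist w y"
        using lipschitz_onD[OF lip w(1) assms(2)] by (simp add: dist_real_def abs_le_iff)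
      also have "real k * dist w y \<le> (real k + 1) * dist w y"
        by (simp add: mult_right_mono)
      also have "(real k + 1) * dist w y \<le> e"
        using w(3) by (simp add: field_simps)
      finally show ?thesis
        by simp
    qed
    ultimately show "\<eta> \<bullet> \<xi> \<le> \<psi> y + e"
      by (rule inner_le_if_mem_cls_value[OF assms(1)])
  qed
qed

lemma upper_env_le_if_le_near:
  fixes \<phi> :: "'a \<Rightarrow> 'b::euclidean_space"
  assumes small_discont: "small X (X - cont_set X \<phi>)" and M: "\<forall>z\<in>X. \<bar>\<phi> z \<bullet> \<xi>\<bar> \<le> M"
    and "x \<in> X" "\<epsilon> > 0" "M \<le> \<beta> + real n * \<epsilon>"
    and near: "\<And>w. w \<in> ball x \<epsilon> \<inter> cont_set X \<phi> \<Longrightarrow> \<phi> w \<bullet> \<xi> \<le> \<beta>"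
  shows "upper_env small X n (\<lambda>y. \<phi> y \<bullet> \<xi>) x \<le> \<beta>"
proof -
  define \<psi> where "\<psi> y = \<beta> + real n * dist y x" for y
  have "cls_le small X (\<lambda>y. \<phi> y \<bullet> \<xi>) \<psi>"
    unfolding cls_le_def
  proof (rule small_subset[OF small_discont], safe)
    fix y assume y: "y \<in> X" "y \<in> cont_set X \<phi>" and "\<not> \<phi> y \<bullet> \<xi> \<le> \<psi> y"
    moreover have "\<phi> y \<bullet> \<xi> \<le> \<psi> y" if "dist y x < \<epsilon>"
      using near[of y] that y by (simp add: \<psi>_def dist_commute add_increasing2)
    moreover have "\<phi> y \<bullet> \<xi> \<le> \<psi> y" if "\<not> dist y x < \<epsilon>"
    proof -
      have "\<phi> y \<bullet> \<xi> \<le> M"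
        using M y(1) abs_le_D1 by blast
      also have "M \<le> \<beta> + real n * \<epsilon>"
        by fact
      also have "real n * \<epsilon> \<le> real n * dist y x"
        using that by (intro mult_left_mono) auto
      finally show ?thesis
        by (simp add: \<psi>_def)
    qed
    ultimately show False
      by blast
  qed
  moreover have "(real n)-lipschitz_on X \<psi>"
    unfolding \<psi>_def by (rule lipschitz_on_cone)
  ultimately have "upper_env small X n (\<lambda>y. \<phi> y \<bullet> \<xi>) x \<le> \<psi> x"
    by (intro upper_env_le_majorant[OF M _ _ \<open>x \<in> X\<close>])
  then show ?thesis
    by (simp add: \<psi>_def)
qed

lemma mem_cls_value_if_inner_le_upper_env:
  fixes \<phi> :: "'a \<Rightarrow> 'b::euclidean_space"
  assumes "small X (X - cont_set X \<phi>)" "bounded (\<phi> ` X)" "x \<in> X"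
    and le: "\<And>\<xi> n. \<xi> \<in> sphere 0 1 \<Longrightarrow> 1 \<le> n \<Longrightarrow> \<eta> \<bullet> \<xi> \<le> upper_env small X n (\<lambda>y. \<phi> y \<bullet> \<xi>) x"
  shows "\<eta> \<in> cls_value X \<phi> x"
proof (rule ccontr)
  assume "\<eta> \<notin> cls_value X \<phi> x"
  then obtain \<epsilon> where "\<epsilon> > 0" and "\<eta> \<notin> closure (convex hull (\<phi> ` (ball x \<epsilon> \<inter> cont_set X \<phi>)))"
    unfolding cls_value_def by blast
  then obtain \<xi> \<beta> where \<xi>: "\<xi> \<in> sphere 0 1" and "\<beta> < \<eta> \<bullet> \<xi>"
    and sep: "\<And>w. w \<in> ball x \<epsilon> \<inter> cont_set X \<phi> \<Longrightarrow> \<phi> w \<bullet> \<xi> < \<beta>"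
    by (elim separate_point_from_convex_hull) blast
  obtain M where M: "\<forall>z\<in>X. \<bar>\<phi> z \<bullet> \<xi>\<bar> \<le> M"
    using bounded_image_abs_inner_le[OF assms(2) \<xi>] .
  obtain n :: nat where "max 1 ((M - \<beta>) / \<epsilon>) \<le> real n"
    using real_arch_simple by blast
  then have "1 \<le> n" "M \<le> \<beta> + real n * \<epsilon>"
    using \<open>\<epsilon> > 0\<close> by (auto simp: field_simps)
  then have "upper_env small X n (\<lambda>y. \<phi> y \<bullet> \<xi>) x \<le> \<beta>"
    using sep less_imp_le by (intro upper_env_le_if_le_near[OF assms(1) M assms(3) \<open>\<epsilon> > 0\<close>]) auto
  then show False
    using le[OF \<xi> \<open>1 \<le> n\<close>] \<open>\<beta> < \<eta> \<bullet> \<xi>\<close> by linarith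
qed

lemma inner_le_upper_env_add_hd:
  fixes G \<phi> :: "'a \<Rightarrow> 'b::euclidean_space"
  assumes "bounded X" "\<zeta> \<in> cls_value X G y" "y \<in> X" "x \<in> X"
    and "\<forall>z\<in>X. \<bar>G z \<bullet> \<xi>\<bar> \<le> M" "\<forall>z\<in>X. \<bar>\<phi> z \<bullet> \<xi>\<bar> \<le> M'"
  shows "\<zeta> \<bullet> \<xi> \<le> upper_env small X n (\<lambda>z. \<phi> z \<bullet> \<xi>) x + real n * dist y x
    + (real n + 1) * hd X (upper_env small X n (\<lambda>z. G z \<bullet> \<xi>)) (upper_env small X n (\<lambda>z. \<phi> z \<bullet> \<xi>))"
proof -
  let ?U = "upper_env small X n (\<lambda>z. G z \<bullet> \<xi>)" and ?V = "upper_env small X n (\<lambda>z. \<phi> z \<bullet> \<xi>)"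
  have lip: "(real n)-lipschitz_on X ?V"
    by (rule lipschitz_upper_env[OF assms(6)])
  have "\<zeta> \<bullet> \<xi> \<le> ?U y"
    by (rule inner_le_upper_env_if_mem_cls_value[OF assms(2,3,5)])
  moreover have "?U y \<le> ?V y + (real n + 1) * hd X ?U ?V"
    using abs_upper_env_le[OF assms(5)] by (intro le_add_hd[OF assms(1) _ lip assms(3)]) blast
  moreover have "?V y \<le> ?V x + real n * dist y x"
    using lipschitz_onD[OF lip assms(3,4)] by (simp add: dist_real_def abs_le_iff)
  ultimately show ?thesis
    by linarith
qed

lemma mem_cls_value_if_envelopes_converge:
  fixes F :: "nat \<Rightarrow> 'a \<Rightarrow> 'b::euclidean_space" and F0 :: "'a \<Rightarrow> 'b"
  assumes "bounded X" "\<And>k. bounded (F k ` X)" "bounded (F0 ` X)" "small X (X - cont_set X F0)"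
    and hd_le: "\<And>k \<xi> n. \<xi> \<in> sphere 0 1 \<Longrightarrow> 1 \<le> n \<Longrightarrow>
      hd X (upper_env small X n (\<lambda>y. F k y \<bullet> \<xi>)) (upper_env small X n (\<lambda>y. F0 y \<bullet> \<xi>)) \<le> d k"
    and "d \<longlonglongrightarrow> 0"
    and "\<And>k. xs k \<in> X" "x \<in> X" "xs \<longlonglongrightarrow> x" "\<eta>s \<longlonglongrightarrow> \<eta>"
    and "\<And>k. \<eta>s k \<in> cls_value X (F k) (xs k)"
  shows "\<eta> \<in> cls_value X F0 x"
proof (rule mem_cls_value_if_inner_le_upper_env[OF assms(4,3,8)])
  fix \<xi> :: 'b and n :: nat assume \<xi>: "\<xi> \<in> sphere 0 1" and "1 \<le> n"
  let ?V = "upper_env small X n (\<lambda>y. F0 y \<bullet> \<xi>)"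
  obtain M0 where M0: "\<forall>z\<in>X. \<bar>F0 z \<bullet> \<xi>\<bar> \<le> M0"
    using bounded_image_abs_inner_le[OF assms(3) \<xi>] .
  have "\<eta>s k \<bullet> \<xi> \<le> ?V x + real n * dist (xs k) x + (real n + 1) * d k" for k
  proof -
    obtain Mk where Mk: "\<forall>z\<in>X. \<bar>F k z \<bullet> \<xi>\<bar> \<le> Mk"
      using bounded_image_abs_inner_le[OF assms(2) \<xi>] .
    have "(real n + 1) * hd X (upper_env small X n (\<lambda>y. F k y \<bullet> \<xi>)) ?V \<le> (real n + 1) * d k"
      using hd_le[OF \<xi> \<open>1 \<le> n\<close>] by (intro mult_left_mono) auto
    then show ?thesis
      using inner_le_upper_env_add_hd[OF assms(1,11,7,8) Mk M0, of n] by linarith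
  qed
  moreover have "(\<lambda>k. ?V x + real n * dist (xs k) x + (real n + 1) * d k)
      \<longlonglongrightarrow> ?V x + real n * dist x x + (real n + 1) * 0"
    by (intro tendsto_intros assms(6,9))
  moreover have "(\<lambda>k. \<eta>s k \<bullet> \<xi>) \<longlonglongrightarrow> \<eta> \<bullet> \<xi>"
    by (intro tendsto_intros assms(10))
  ultimately show "\<eta> \<bullet> \<xi> \<le> ?V x"
    by (intro tendsto_le[OF trivial_limit_sequentially]) auto
qed

end

section \<open>Meagre and null sets\<close>

lemma nowhere_dense_subset: "nowhere_dense S \<Longrightarrow> T \<subseteq> S \<Longrightarrow> nowhere_dense T"
  unfolding nowhere_dense_def using interior_mono[OF closure_mono, of T S] by blast

lemma open_not_subset_countable_Union_nowhere_dense: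
  fixes U :: "'a::euclidean_space set" and N :: "nat \<Rightarrow> 'a set"
  assumes "open U" "U \<noteq> {}" "\<And>i. nowhere_dense (N i)"
  shows "\<not> U \<subseteq> (\<Union>i. N i)"
proof
  assume U: "U \<subseteq> (\<Union>i. N i)"
  let ?G = "range (\<lambda>i. - closure (N i))"
  have "UNIV \<subseteq> closure (\<Inter>?G)"
  proof (rule Baire)
    fix T assume "T \<in> ?G"
    then show "openin (top_of_set UNIV) T \<and> UNIV \<subseteq> closure T"
      using assms(3) by (auto simp: closure_complement nowhere_dense_def)
  qed auto
  then have "U \<inter> \<Inter>?G \<noteq> {}"
    using assms(1,2) open_Int_closure_eq_empty by blast
  then show False
    using U closure_subset by blast
qed

lemma smallness_cm_small:
  fixes X :: "'a::euclidean_space set"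
  assumes "open X"
  shows "smallness cm_small X"
proof
  show "cm_small X {}"
    unfolding cm_small_def nowhere_dense_def by (intro exI[of _ "\<lambda>i. {}"]) simp
  show "cm_small X B" if A: "cm_small X A" and B: "B \<subseteq> A" for A B
  proof -
    obtain N :: "nat \<Rightarrow> 'a set" where N: "\<forall>i. N i \<subseteq> X \<and> nowhere_dense (N i)" "A = (\<Union>i. N i)"
      using A unfolding cm_small_def by blast
    have "N i \<inter> B \<subseteq> X \<and> nowhere_dense (N i \<inter> B)" for i
      using N(1) nowhere_dense_subset[of "N i" "N i \<inter> B"] by blast
    moreover have "B = (\<Union>i. N i \<inter> B)"
      using N(2) B by blast
    ultimately show ?thesis
      unfolding cm_small_def by (intro exI[of _ "\<lambda>i. N i \<inter> B"]) simp
  qed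
  show "\<not> cm_small X U" if U: "open U" "U \<noteq> {}" for U
  proof
    assume "cm_small X U"
    then obtain N :: "nat \<Rightarrow> 'a set" where "\<forall>i. N i \<subseteq> X \<and> nowhere_dense (N i)" "U = (\<Union>i. N i)"
      unfolding cm_small_def by blast
    then show False
      using open_not_subset_countable_Union_nowhere_dense[OF U, of N] by blast
  qed
qed (fact assms)

lemma smallness_ae_small:
  assumes "open X"
  shows "smallness ae_small X"
proof
  show "ae_small X B" if "ae_small X A" "B \<subseteq> A" for A B
    using that null_sets_completion_subset unfolding ae_small_def by blast
  show "\<not> ae_small X U" if "open U" "U \<subseteq> X" "U \<noteq> {}" for U
    using open_not_negligible[OF that(1,3)] negligible_iff_null_sets unfolding ae_small_def by blast
qed (use assms in \<open>simp_all add: ae_small_def\<close>)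

section \<open>The metrics s and r\<close>

lemma cSUP_cSUP_upper:
  fixes Q :: "'i \<Rightarrow> 'j \<Rightarrow> real"
  assumes "i \<in> I" "j \<in> J" "\<And>i j. i \<in> I \<Longrightarrow> j \<in> J \<Longrightarrow> Q i j \<le> C"
  shows "Q i j \<le> (SUP i\<in>I. SUP j\<in>J. Q i j)"
proof -
  have "Q i j \<le> (SUP j\<in>J. Q i j)"
    using assms by (intro cSUP_upper bdd_aboveI2) auto
  also have "\<dots> \<le> (SUP i\<in>I. SUP j\<in>J. Q i j)"
    using assms by (intro cSUP_upper bdd_aboveI2 cSUP_least) auto
  finally show ?thesis .
qed

lemma bounded_image_imp_norm_le:
  fixes F G :: "'a \<Rightarrow> 'b::real_normed_vector"
  assumes "bounded (F ` X)" "bounded (G ` X)"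
  obtains M where "\<forall>z\<in>X. norm (F z) \<le> M" "\<forall>z\<in>X. norm (G z) \<le> M"
proof -
  have "bounded (F ` X \<union> G ` X)"
    using assms by simp
  then obtain M where "\<forall>v \<in> F ` X \<union> G ` X. norm v \<le> M"
    unfolding bounded_iff by blast
  then show ?thesis
    using that by blast
qed

lemma hd_upper_env_le_s_vec:
  fixes F G :: "'a::euclidean_space \<Rightarrow> 'b::euclidean_space"
  assumes "open X" "bounded X" "X \<noteq> {}" "bounded (F ` X)" "bounded (G ` X)"
    and "\<xi> \<in> sphere 0 1" "1 \<le> n"
  shows "hd X (upper_env cm_small X n (\<lambda>y. F y \<bullet> \<xi>)) (upper_env cm_small X n (\<lambda>y. G y \<bullet> \<xi>))
    \<le> s_vec X F G"
proof -
  interpret smallness cm_small X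
    by (rule smallness_cm_small[OF assms(1)])
  obtain M where M: "\<forall>z\<in>X. norm (F z) \<le> M" "\<forall>z\<in>X. norm (G z) \<le> M"
    using bounded_image_imp_norm_le[OF assms(4,5)] .
  \<comment> \<open>The lower envelopes must be bounded as well: otherwise the supremum defining
    \<open>s_vec\<close> is not bounded above and carries no information.\<close>
  have "max (hd X (lower_env cm_small X n (\<lambda>y. F y \<bullet> \<xi>)) (lower_env cm_small X n (\<lambda>y. G y \<bullet> \<xi>)))
            (hd X (upper_env cm_small X n (\<lambda>y. F y \<bullet> \<xi>)) (upper_env cm_small X n (\<lambda>y. G y \<bullet> \<xi>)))
        \<le> s_vec X F G"
    unfolding s_vec_def s_real_def
  proof (rule cSUP_cSUP_upper[where C = "diameter (X \<times> {-M..M})"])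
    fix \<zeta> :: 'b and m :: nat assume \<zeta>: "\<zeta> \<in> sphere 0 1"
    have fF: "\<forall>z\<in>X. \<bar>F z \<bullet> \<zeta>\<bar> \<le> M" and fG: "\<forall>z\<in>X. \<bar>G z \<bullet> \<zeta>\<bar> \<le> M"
      using M abs_inner_le_of_norm_le[OF _ \<zeta>] by blast+
    have env: "\<forall>z\<in>X. \<bar>lower_env cm_small X m (\<lambda>y. F y \<bullet> \<zeta>) z\<bar> \<le> M"
      "\<forall>z\<in>X. \<bar>lower_env cm_small X m (\<lambda>y. G y \<bullet> \<zeta>) z\<bar> \<le> M"
      "\<forall>z\<in>X. \<bar>upper_env cm_small X m (\<lambda>y. F y \<bullet> \<zeta>) z\<bar> \<le> M"
      "\<forall>z\<in>X. \<bar>upper_env cm_small X m (\<lambda>y. G y \<bullet> \<zeta>) z\<bar> \<le> M"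
      using abs_lower_env_le[OF fF] abs_lower_env_le[OF fG] abs_upper_env_le[OF fF] abs_upper_env_le[OF fG]
      by blast+
    show "max (hd X (lower_env cm_small X m (\<lambda>y. F y \<bullet> \<zeta>)) (lower_env cm_small X m (\<lambda>y. G y \<bullet> \<zeta>)))
                   (hd X (upper_env cm_small X m (\<lambda>y. F y \<bullet> \<zeta>)) (upper_env cm_small X m (\<lambda>y. G y \<bullet> \<zeta>)))
               \<le> diameter (X \<times> {-M..M})"
      using hd_le_diameter[OF assms(2,3) env(1,2)] hd_le_diameter[OF assms(2,3) env(3,4)] by simp
  qed (use assms(6,7) in auto)
  then show ?thesis
    by (rule order_trans[OF max.cobounded2])
qed

lemma hd_upper_env_le_r_vec:
  fixes F G :: "'a::euclidean_space \<Rightarrow> 'b::euclidean_space"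
  assumes "open X" "bounded X" "X \<noteq> {}" "bounded (F ` X)" "bounded (G ` X)"
    and "\<xi> \<in> sphere 0 1" "1 \<le> n"
  shows "hd X (upper_env ae_small X n (\<lambda>y. F y \<bullet> \<xi>)) (upper_env ae_small X n (\<lambda>y. G y \<bullet> \<xi>))
    \<le> r_vec X F G"
proof -
  interpret smallness ae_small X
    by (rule smallness_ae_small[OF assms(1)])
  obtain M where M: "\<forall>z\<in>X. norm (F z) \<le> M" "\<forall>z\<in>X. norm (G z) \<le> M"
    using bounded_image_imp_norm_le[OF assms(4,5)] .
  have X: "X \<in> lmeasurable"
    using assms(1,2) by (simp add: bounded_set_imp_lmeasurable borel_open)
  have "max (dlt X (lower_env ae_small X n (\<lambda>y. F y \<bullet> \<xi>)) (lower_env ae_small X n (\<lambda>y. G y \<bullet> \<xi>)))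
            (dlt X (upper_env ae_small X n (\<lambda>y. F y \<bullet> \<xi>)) (upper_env ae_small X n (\<lambda>y. G y \<bullet> \<xi>)))
        \<le> r_vec X F G"
    unfolding r_vec_def r_real_def
  proof (rule cSUP_cSUP_upper[where C = "diameter (X \<times> {-M..M}) + measure lebesgue X * (2 * M)"])
    fix \<zeta> :: 'b and m :: nat assume \<zeta>: "\<zeta> \<in> sphere 0 1"
    have fF: "\<forall>z\<in>X. \<bar>F z \<bullet> \<zeta>\<bar> \<le> M" and fG: "\<forall>z\<in>X. \<bar>G z \<bullet> \<zeta>\<bar> \<le> M"
      using M abs_inner_le_of_norm_le[OF _ \<zeta>] by blast+
    have env: "\<forall>z\<in>X. \<bar>lower_env ae_small X m (\<lambda>y. F y \<bullet> \<zeta>) z\<bar> \<le> M"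
      "\<forall>z\<in>X. \<bar>lower_env ae_small X m (\<lambda>y. G y \<bullet> \<zeta>) z\<bar> \<le> M"
      "\<forall>z\<in>X. \<bar>upper_env ae_small X m (\<lambda>y. F y \<bullet> \<zeta>) z\<bar> \<le> M"
      "\<forall>z\<in>X. \<bar>upper_env ae_small X m (\<lambda>y. G y \<bullet> \<zeta>) z\<bar> \<le> M"
      using abs_lower_env_le[OF fF] abs_lower_env_le[OF fG] abs_upper_env_le[OF fF] abs_upper_env_le[OF fG]
      by blast+
    show "max (dlt X (lower_env ae_small X m (\<lambda>y. F y \<bullet> \<zeta>)) (lower_env ae_small X m (\<lambda>y. G y \<bullet> \<zeta>)))
                   (dlt X (upper_env ae_small X m (\<lambda>y. F y \<bullet> \<zeta>)) (upper_env ae_small X m (\<lambda>y. G y \<bullet> \<zeta>)))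
               \<le> diameter (X \<times> {-M..M}) + measure lebesgue X * (2 * M)"
      using dlt_le_hd_add[OF X env(1,2)] dlt_le_hd_add[OF X env(3,4)]
        hd_le_diameter[OF assms(2,3) env(1,2)] hd_le_diameter[OF assms(2,3) env(3,4)]
      by simp
  qed (use assms(6,7) in auto)
  then show ?thesis
    by (rule order_trans[OF hd_le_dlt order_trans[OF max.cobounded2]])
qed

lemma mem_cls_value_if_s_vec_converges:
  fixes F :: "nat \<Rightarrow> 'a::euclidean_space \<Rightarrow> 'b::euclidean_space"
  assumes "open X" "bounded X"
    and "\<And>k. in_Ccm X (F k)" "in_Ccm X F0" "(\<lambda>k. s_vec X (F k) F0) \<longlonglongrightarrow> 0"
    and "\<And>k. xs k \<in> X" "x \<in> X" "xs \<longlonglongrightarrow> x" "\<eta>s \<longlonglongrightarrow> \<eta>"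
    and "\<And>k. \<eta>s k \<in> cls_value X (F k) (xs k)"
  shows "\<eta> \<in> cls_value X F0 x"
proof (rule smallness.mem_cls_value_if_envelopes_converge[OF smallness_cm_small[OF assms(1)] assms(2)])
  show "hd X (upper_env cm_small X n (\<lambda>y. F k y \<bullet> \<xi>)) (upper_env cm_small X n (\<lambda>y. F0 y \<bullet> \<xi>))
      \<le> s_vec X (F k) F0" if "\<xi> \<in> sphere 0 1" "1 \<le> n" for k \<xi> n
    using assms(1-4,7) that by (intro hd_upper_env_le_s_vec) (auto simp: in_Ccm_def)
qed (use assms in \<open>auto simp: in_Ccm_def comeager_def\<close>)

lemma mem_cls_value_if_r_vec_converges:
  fixes F :: "nat \<Rightarrow> 'a::euclidean_space \<Rightarrow> 'b::euclidean_space"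
  assumes "open X" "bounded X"
    and "\<And>k. in_Cae X (F k)" "in_Cae X F0" "(\<lambda>k. r_vec X (F k) F0) \<longlonglongrightarrow> 0"
    and "\<And>k. xs k \<in> X" "x \<in> X" "xs \<longlonglongrightarrow> x" "\<eta>s \<longlonglongrightarrow> \<eta>"
    and "\<And>k. \<eta>s k \<in> cls_value X (F k) (xs k)"
  shows "\<eta> \<in> cls_value X F0 x"
proof (rule smallness.mem_cls_value_if_envelopes_converge[OF smallness_ae_small[OF assms(1)] assms(2)])
  show "hd X (upper_env ae_small X n (\<lambda>y. F k y \<bullet> \<xi>)) (upper_env ae_small X n (\<lambda>y. F0 y \<bullet> \<xi>))
      \<le> r_vec X (F k) F0" if "\<xi> \<in> sphere 0 1" "1 \<le> n" for k \<xi> n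
    using assms(1-4,7) that by (intro hd_upper_env_le_r_vec) (auto simp: in_Cae_def)
qed (use assms in \<open>auto simp: in_Cae_def\<close>)

theorem proposition2p4:
  fixes X :: "'a::euclidean_space set"
  assumes "open X" and "bounded X" and "X \<noteq> {}"
  shows "(\<forall>(F :: nat \<Rightarrow> 'a \<Rightarrow> 'a) F0 xs x \<eta>s \<eta>.
            (\<forall>k. in_Ccm X (F k)) \<and> in_Ccm X F0 \<and> (\<lambda>k. s_vec X (F k) F0) \<longlonglongrightarrow> 0 \<and>
            (\<forall>k. xs k \<in> X) \<and> x \<in> X \<and> xs \<longlonglongrightarrow> x \<and> \<eta>s \<longlonglongrightarrow> \<eta> \<and>
            (\<forall>k. \<eta>s k \<in> cls_value X (F k) (xs k))
            \<longrightarrow> \<eta> \<in> cls_value X F0 x)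
       \<and> (\<forall>(F :: nat \<Rightarrow> 'a \<Rightarrow> 'a) F0 xs x \<eta>s \<eta>.
            (\<forall>k. in_Cae X (F k)) \<and> in_Cae X F0 \<and> (\<lambda>k. r_vec X (F k) F0) \<longlonglongrightarrow> 0 \<and>
            (\<forall>k. xs k \<in> X) \<and> x \<in> X \<and> xs \<longlonglongrightarrow> x \<and> \<eta>s \<longlonglongrightarrow> \<eta> \<and>
            (\<forall>k. \<eta>s k \<in> cls_value X (F k) (xs k))
            \<longrightarrow> \<eta> \<in> cls_value X F0 x)"
  using mem_cls_value_if_s_vec_converges[OF assms(1,2)] mem_cls_value_if_r_vec_converges[OF assms(1,2)]
  by blast

end
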